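(* Suppose $P$ has a positive real eigenvalue different from $1$, and let $\theta$ be the largest positive real eigenvalue of $P$ different from $1$. Then for every allowed word $u$ of $\Sigma_A$, the escape rate into the cylinder $C_u$ satisfies $0<\rho(C_u)\le-\ln\theta$.
   Context: Let $\Sigma=\{1,\dots,N\}$, $A$ an irreducible $N\times N$ $0$–$1$ matrix, $\Sigma_A=\{x\in\Sigma^{\mathbb N}:A_{x_nx_{n+1}}=1\ \forall n\}$ with left shift $\sigma$. A word is allowed if it occurs in some element of $\Sigma_A$; $C_u$ is the set of $x\in\Sigma_A$ beginning with $u$. $P$ is a row-stochastic matrix with $P_{ij}>0$ iff $A_{ij}=1$, $\mathbf p$ its stationary vector, $\mu=\mu_P$ the Markov measure $\mu(C_w)=p_{w_1}P_{w_1w_2}\cdots P_{w_{n-1}w_n}$. For a hole $H\subseteq\Sigma_A$, $\mathcal W_m=\{x:\sigma^ix\notin H,0\le i\le m\}$ and $\rho(H)=-\lim_m\frac1m\ln\mu(\mathcal W_m)$. *)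

theory Defs
  imports "HOL-Analysis.Analysis" "HOL-Probability.Probability"
begin

text \<open>The alphabet \<Sigma> = {1..N} is modelled by a finite type 'n; points of the
full shift are sequences x :: nat \<Rightarrow> 'n; words are lists.\<close>

definition mat_power :: "real^'n^'n \<Rightarrow> nat \<Rightarrow> real^'n^'n" where
  "mat_power A k = ((\<lambda>B. B ** A) ^^ k) (mat 1)"

definition zero_one_matrix :: "real^'n^'n \<Rightarrow> bool" where
  "zero_one_matrix A \<longleftrightarrow> (\<forall>i j. A$i$j = 0 \<or> A$i$j = 1)"

definition irreducible_matrix :: "real^'n^'n \<Rightarrow> bool" where
  "irreducible_matrix A \<longleftrightarrow> (\<forall>i j. \<exists>k>0. mat_power A k $i$j > 0)"

definition shift_space :: "real^'n^'n \<Rightarrow> (nat \<Rightarrow> 'n) set" where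
  "shift_space A = {x. \<forall>n. A $ x n $ x (Suc n) = 1}"

definition shift :: "(nat \<Rightarrow> 'n) \<Rightarrow> (nat \<Rightarrow> 'n)" where
  "shift x = (\<lambda>n. x (Suc n))"

definition allowed_word :: "real^'n^'n \<Rightarrow> 'n list \<Rightarrow> bool" where
  "allowed_word A w \<longleftrightarrow> (\<exists>x\<in>shift_space A. \<exists>k. \<forall>i<length w. x (k + i) = w ! i)"

definition cylinder :: "real^'n^'n \<Rightarrow> 'n list \<Rightarrow> (nat \<Rightarrow> 'n) set" where
  "cylinder A w = {x \<in> shift_space A. \<forall>i<length w. x i = w ! i}"

definition row_stochastic :: "real^'n^'n \<Rightarrow> bool" where
  "row_stochastic P \<longleftrightarrow> (\<forall>i j. P$i$j \<ge> 0) \<and> (\<forall>i. (\<Sum>j\<in>UNIV. P$i$j) = 1)"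

definition stationary_vector :: "real^'n^'n \<Rightarrow> real^'n \<Rightarrow> bool" where
  "stationary_vector P p \<longleftrightarrow> (\<forall>i. p$i \<ge> 0) \<and> (\<Sum>i\<in>UNIV. p$i) = 1 \<and> p v* P = p"

text \<open>Markov measure of the cylinder of a (nonempty) word w.\<close>
definition markov_weight :: "real^'n^'n \<Rightarrow> real^'n \<Rightarrow> 'n list \<Rightarrow> real" where
  "markov_weight P p w = p $ (w ! 0) * (\<Prod>i<length w - 1. P $ (w ! i) $ (w ! Suc i))"

definition is_markov_measure ::
  "real^'n^'n \<Rightarrow> real^'n^'n \<Rightarrow> real^'n \<Rightarrow> (nat \<Rightarrow> 'n) measure \<Rightarrow> bool" where
  "is_markov_measure A P p \<mu> \<longleftrightarrow>
     prob_space \<mu> \<and>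
     sets \<mu> = sets (Pi\<^sub>M UNIV (\<lambda>_. count_space UNIV)) \<and>
     (\<forall>w. w \<noteq> [] \<and> allowed_word A w \<longrightarrow> measure \<mu> (cylinder A w) = markov_weight P p w)"

definition survivors :: "(nat \<Rightarrow> 'n) set \<Rightarrow> nat \<Rightarrow> (nat \<Rightarrow> 'n) set" where
  "survivors H m = {x. \<forall>i\<le>m. (shift ^^ i) x \<notin> H}"

definition real_eigenvalue :: "real^'n^'n \<Rightarrow> real \<Rightarrow> bool" where
  "real_eigenvalue P t \<longleftrightarrow> (\<exists>v. v \<noteq> 0 \<and> P *v v = t *\<^sub>R v)"

end

theory Submission
  imports Defs
begin

text \<open>Let \<open>g\<^sub>m(j)\<close> be the probability that the chain started in state \<open>j\<close> shows no
occurrence of \<open>u\<close> beginning at the times \<open>0, \<dots>, m\<close>, and \<open>G\<^sub>m = max\<^sub>j g\<^sub>m(j)\<close>.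
Since \<open>\<mu>(W\<^sub>m) = \<Sum>\<^sub>j p\<^sub>j g\<^sub>m(j)\<close> and \<open>p\<close> is strictly positive, \<open>\<mu>(W\<^sub>m)\<close> is
comparable with \<open>G\<^sub>m\<close>. Restarting the chain after a gap of length \<open>|u|\<close> gives
\<open>G\<^bsub>m+n+|u|\<^esub> \<le> G\<^sub>m G\<^sub>n\<close>, so by Fekete's lemma \<open>ln G\<^sub>m / m\<close> converges to some
\<open>l\<close>, and \<open>\<rho>(C\<^sub>u) = -l\<close>. By irreducibility every state reaches \<open>u\<close> with
positive probability within a bounded time \<open>K\<close>, so \<open>G\<^sub>K < 1\<close> and \<open>l < 0\<close>.
Conversely, an eigenvector \<open>v\<close> for \<open>\<theta> \<noteq> 1\<close> is orthogonal to \<open>p\<close>; normalised so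
that \<open>v(u\<^sub>1) \<le> 0\<close>, its positive part \<open>f\<close> satisfies \<open>P f \<ge> \<theta> f\<close> off \<open>u\<^sub>1\<close>.
Hence avoiding \<open>u\<^sub>1\<close> (and thus \<open>u\<close>) for \<open>n\<close> steps from a state where \<open>f > 0\<close>
has probability at least a constant times \<open>\<theta>\<^sup>n\<close>, which gives \<open>l \<ge> ln \<theta>\<close>.\<close>

definition sum_words :: "nat \<Rightarrow> ('a::finite list \<Rightarrow> real) \<Rightarrow> real" where
  "sum_words n f = (\<Sum>w\<in>{w. length w = n}. f w)"

lemma sum_words_0 [simp]: "sum_words 0 f = f []"
  by (simp add: sum_words_def)

lemma sum_words_Suc: "sum_words (Suc n) f = (\<Sum>a\<in>UNIV. sum_words n (\<lambda>w. f (a # w)))"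
proof -
  have lists: "{w::'a list. length w = Suc n} = (\<lambda>(w, a). a # w) ` ({w. length w = n} \<times> UNIV)"
    using lists_length_Suc_eq[of "UNIV::'a set" n] by simp
  have inj: "inj_on (\<lambda>(w, a). a # w) ({w::'a list. length w = n} \<times> UNIV)"
    by (auto simp: inj_on_def)
  have "sum_words (Suc n) f = (\<Sum>(w, a)\<in>{w::'a list. length w = n} \<times> UNIV. f (a # w))"
    unfolding sum_words_def lists by (subst sum.reindex[OF inj]) (simp add: case_prod_unfold)
  also have "\<dots> = (\<Sum>w\<in>{w::'a list. length w = n}. \<Sum>a\<in>UNIV. f (a # w))"
    by (rule sum.cartesian_product[symmetric])
  also have "\<dots> = (\<Sum>a\<in>UNIV. \<Sum>w\<in>{w::'a list. length w = n}. f (a # w))"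
    by (rule sum.swap)
  finally show ?thesis by (simp add: sum_words_def)
qed

lemma sum_words_add: "sum_words (m + n) f = sum_words m (\<lambda>v. sum_words n (\<lambda>w. f (v @ w)))"
proof (induction m arbitrary: f)
  case 0
  then show ?case by simp
next
  case (Suc m)
  show ?case using Suc[of "\<lambda>w. f (_ # w)"] by (simp add: sum_words_Suc)
qed

lemma sum_words_mono: "(\<And>w. length w = n \<Longrightarrow> f w \<le> g w) \<Longrightarrow> sum_words n f \<le> sum_words n g"
  unfolding sum_words_def by (rule sum_mono) auto

lemma sum_words_nonneg: "(\<And>w. length w = n \<Longrightarrow> 0 \<le> f w) \<Longrightarrow> 0 \<le> sum_words n f"
  unfolding sum_words_def by (rule sum_nonneg) auto

lemma sum_words_cmult: "sum_words n (\<lambda>w. c * f w) = c * sum_words n f"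
  unfolding sum_words_def by (simp add: sum_distrib_left)

lemma sum_words_diff: "sum_words n (\<lambda>w. f w - g w) = sum_words n f - sum_words n g"
  unfolding sum_words_def by (simp add: sum_subtractf)

lemma sum_words_delta: "length v = n \<Longrightarrow> sum_words n (\<lambda>w. if w = v then f w else 0) = f v"
  unfolding sum_words_def by (simp add: finite_list_length)

lemma row_stochastic_nonneg: "row_stochastic P \<Longrightarrow> 0 \<le> P$i$j"
  by (simp add: row_stochastic_def)

lemma row_stochastic_sum: "row_stochastic P \<Longrightarrow> (\<Sum>j\<in>UNIV. P$i$j) = 1"
  by (simp add: row_stochastic_def)

lemma row_stochastic_average_le:
  assumes "row_stochastic P" and "\<And>k. f k \<le> M"
  shows "(\<Sum>k\<in>UNIV. P$j$k * f k) \<le> M"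
proof -
  have "(\<Sum>k\<in>UNIV. P$j$k * f k) \<le> (\<Sum>k\<in>UNIV. P$j$k * M)"
    by (intro sum_mono mult_left_mono assms(2) row_stochastic_nonneg[OF assms(1)])
  also have "\<dots> = M"
    using row_stochastic_sum[OF assms(1)] by (simp add: sum_distrib_right[symmetric])
  finally show ?thesis .
qed

fun path_weight :: "real^'n^'n \<Rightarrow> 'n list \<Rightarrow> real" where
  "path_weight P (a # b # w) = P$a$b * path_weight P (b # w)"
| "path_weight P _ = 1"

lemma path_weight_nonneg: "row_stochastic P \<Longrightarrow> 0 \<le> path_weight P w"
  by (induction P w rule: path_weight.induct) (auto simp: row_stochastic_nonneg)

lemma path_weight_append:
  "v \<noteq> [] \<Longrightarrow> w \<noteq> [] \<Longrightarrow>
     path_weight P (v @ w) = path_weight P v * P$(last v)$(hd w) * path_weight P w"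
proof (induction P v rule: path_weight.induct)
  case ("2_2" P a)
  then show ?case by (cases w) auto
qed auto

lemma path_weight_snoc: "v \<noteq> [] \<Longrightarrow> path_weight P (v @ [k]) = path_weight P v * P$(last v)$k"
  by (subst path_weight_append) auto

lemma path_weight_glue:
  "v \<noteq> [] \<Longrightarrow> w \<noteq> [] \<Longrightarrow> last v = hd w \<Longrightarrow>
     path_weight P (v @ tl w) = path_weight P v * path_weight P w"
proof (induction P v rule: path_weight.induct)
  case ("2_2" P a)
  then show ?case by (cases w) auto
qed auto

lemma path_weight_eq_prod: "path_weight P w = (\<Prod>i<length w - 1. P $ (w ! i) $ (w ! Suc i))"
proof (induction P w rule: path_weight.induct)
  case (1 P a b w)
  have "(\<Prod>i<length (a # b # w) - 1. P $ ((a # b # w) ! i) $ ((a # b # w) ! Suc i))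
      = P$a$b * (\<Prod>i<length (b # w) - 1. P $ ((b # w) ! i) $ ((b # w) ! Suc i))"
    by (simp add: prod.lessThan_Suc_shift del: prod.lessThan_Suc)
  with 1 show ?case by simp
qed auto

lemma path_weight_pos_iff:
  "row_stochastic P \<Longrightarrow>
     0 < path_weight P w \<longleftrightarrow> (\<forall>i. Suc i < length w \<longrightarrow> 0 < P$(w!i)$(w!Suc i))"
proof (induction P w rule: path_weight.induct)
  case (1 P a b w)
  have "0 < path_weight P (a # b # w) \<longleftrightarrow> 0 < P$a$b \<and> 0 < path_weight P (b # w)"
    using path_weight_nonneg[OF 1(2), of "b # w"] row_stochastic_nonneg[OF 1(2), of a b]
    by (simp add: zero_less_mult_iff)
  also have "\<dots> \<longleftrightarrow> (\<forall>i. Suc i < length (a # b # w) \<longrightarrow> 0 < P$((a # b # w)!i)$((a # b # w)!Suc i))"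
    using 1 by (auto simp: less_Suc_eq_0_disj)
  finally show ?case .
qed auto

lemma sum_words_path_weight_extend:
  assumes "row_stochastic P" and "v \<noteq> []"
  shows "sum_words n (\<lambda>w. path_weight P (v @ w)) = path_weight P v"
  using assms(2)
proof (induction n arbitrary: v)
  case (Suc n)
  have "sum_words (Suc n) (\<lambda>w. path_weight P (v @ w))
      = (\<Sum>k\<in>UNIV. sum_words n (\<lambda>w. path_weight P ((v @ [k]) @ w)))"
    by (simp add: sum_words_Suc)
  also have "\<dots> = (\<Sum>k\<in>UNIV. path_weight P (v @ [k]))"
    by (rule sum.cong[OF refl], rule Suc.IH) simp
  also have "\<dots> = (\<Sum>k\<in>UNIV. path_weight P v * P$(last v)$k)"
    using Suc.prems by (simp add: path_weight_snoc)
  also have "\<dots> = path_weight P v"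
    using row_stochastic_sum[OF assms(1)] by (simp add: sum_distrib_left[symmetric])
  finally show ?case .
qed simp

definition occurs_at :: "'a list \<Rightarrow> 'a list \<Rightarrow> nat \<Rightarrow> bool" where
  "occurs_at u w i \<longleftrightarrow> (\<forall>k<length u. w ! (i + k) = u ! k)"

definition avoids :: "'a list \<Rightarrow> nat \<Rightarrow> 'a list \<Rightarrow> bool" where
  "avoids u m w \<longleftrightarrow> (\<forall>i\<le>m. \<not> occurs_at u w i)"

text \<open>Whether \<open>u\<close> occurs at one of the times \<open>0, \<dots>, m\<close> depends only on the first
\<open>m + |u|\<close> states, so \<open>avoid_prob P u m j\<close> is the probability that the chain started
in \<open>j\<close> avoids these occurrences (for \<open>u \<noteq> []\<close>).\<close>

definition avoid_prob :: "real^'n^'n \<Rightarrow> 'n list \<Rightarrow> nat \<Rightarrow> 'n \<Rightarrow> real" where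
  "avoid_prob P u m j = sum_words (m + length u - 1)
     (\<lambda>w. if avoids u m (j # w) then path_weight P (j # w) else 0)"

definition max_avoid_prob :: "real^'n^'n \<Rightarrow> 'n list \<Rightarrow> nat \<Rightarrow> real" where
  "max_avoid_prob P u m = Max (range (avoid_prob P u m))"

lemma occurs_at_append_left:
  "i + length u \<le> length v \<Longrightarrow> occurs_at u (v @ w) i \<longleftrightarrow> occurs_at u v i"
  by (simp add: occurs_at_def nth_append)

lemma occurs_at_append_right: "occurs_at u (v @ w) (length v + i) \<longleftrightarrow> occurs_at u w i"
  by (simp add: occurs_at_def nth_append add.assoc)

lemma avoids_append:
  assumes "avoids u (m + n + length u) (v @ w)" and "length v = m + length u"
  shows "avoids u m v" and "avoids u n w"
proof -
  show "avoids u m v"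
    unfolding avoids_def
  proof (intro allI impI)
    fix i assume "i \<le> m"
    then have "\<not> occurs_at u (v @ w) i" using assms(1) by (simp add: avoids_def)
    then show "\<not> occurs_at u v i" using assms(2) \<open>i \<le> m\<close> by (simp add: occurs_at_append_left)
  qed
  show "avoids u n w"
    unfolding avoids_def
  proof (intro allI impI)
    fix i assume "i \<le> n"
    then have "\<not> occurs_at u (v @ w) (length v + i)" using assms by (simp add: avoids_def)
    then show "\<not> occurs_at u w i" by (simp add: occurs_at_append_right)
  qed
qed

lemma avoid_prob_nonneg: "row_stochastic P \<Longrightarrow> 0 \<le> avoid_prob P u m j"
  unfolding avoid_prob_def by (rule sum_words_nonneg) (simp add: path_weight_nonneg)

lemma avoid_prob_le_1:
  assumes "row_stochastic P"
  shows "avoid_prob P u m j \<le> 1"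
proof -
  have "avoid_prob P u m j \<le> sum_words (m + length u - 1) (\<lambda>w. path_weight P ([j] @ w))"
    unfolding avoid_prob_def by (rule sum_words_mono) (simp add: path_weight_nonneg[OF assms])
  also have "\<dots> = 1"
    using sum_words_path_weight_extend[OF assms, of "[j]"] by simp
  finally show ?thesis .
qed

lemma avoid_prob_le_max: "avoid_prob P u m j \<le> max_avoid_prob P u m"
  unfolding max_avoid_prob_def by (rule Max_ge) auto

lemma max_avoid_prob_attained: obtains j where "max_avoid_prob P u m = avoid_prob P u m j"
proof -
  have "max_avoid_prob P u m \<in> range (avoid_prob P u m)"
    unfolding max_avoid_prob_def by (rule Max_in) auto
  then show ?thesis using that by blast
qed

lemma max_avoid_prob_le_1: "row_stochastic P \<Longrightarrow> max_avoid_prob P u m \<le> 1"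
  by (metis max_avoid_prob_attained avoid_prob_le_1)

lemma avoid_prob_submult:
  assumes rs: "row_stochastic P" and u: "u \<noteq> []"
  shows "avoid_prob P u (m + n + length u) j \<le> avoid_prob P u m j * max_avoid_prob P u n"
proof -
  let ?L = "length u"
  define X where "X v = (if avoids u m (j # v) then path_weight P (j # v) else 0)" for v
  define Y where "Y k w = (if avoids u n (k # w) then path_weight P (k # w) else 0)" for k w
  define F where "F w = (if avoids u (m + n + ?L) (j # w) then path_weight P (j # w) else 0)" for w
  have X_nonneg: "0 \<le> X v" for v unfolding X_def using path_weight_nonneg[OF rs] by simp
  have split: "F (v @ k # w) \<le> X v * P$(last (j # v))$k * Y k w"
    if "length v = m + ?L - 1" for v k w
  proof (cases "avoids u (m + n + ?L) ((j # v) @ (k # w))")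
    case True
    have "length (j # v) = m + ?L" using that u by simp
    note avoids_append[OF True this]
    then show ?thesis
      using True path_weight_append[of "j # v" "k # w" P] by (simp add: F_def X_def Y_def)
  next
    case False
    then show ?thesis using X_nonneg path_weight_nonneg[OF rs] row_stochastic_nonneg[OF rs]
      by (simp add: F_def Y_def)
  qed
  have "m + n + ?L + ?L - 1 = (m + ?L - 1) + Suc (n + ?L - 1)" using u by (cases u) auto
  then have "avoid_prob P u (m + n + ?L) j = sum_words ((m + ?L - 1) + Suc (n + ?L - 1)) F"
    by (simp only: avoid_prob_def F_def[abs_def])
  also have "\<dots> = sum_words (m + ?L - 1)
      (\<lambda>v. \<Sum>k\<in>UNIV. sum_words (n + ?L - 1) (\<lambda>w. F (v @ k # w)))"
    by (subst sum_words_add) (simp only: sum_words_Suc)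
  also have "\<dots> \<le> sum_words (m + ?L - 1)
      (\<lambda>v. \<Sum>k\<in>UNIV. sum_words (n + ?L - 1) (\<lambda>w. X v * P$(last (j # v))$k * Y k w))"
    by (intro sum_words_mono sum_mono split)
  also have "\<dots> = sum_words (m + ?L - 1)
      (\<lambda>v. X v * (\<Sum>k\<in>UNIV. P$(last (j # v))$k * avoid_prob P u n k))"
    unfolding avoid_prob_def Y_def[abs_def] by (simp add: sum_words_cmult sum_distrib_left mult.assoc)
  also have "\<dots> \<le> sum_words (m + ?L - 1) (\<lambda>v. X v * max_avoid_prob P u n)"
    by (intro sum_words_mono mult_left_mono X_nonneg row_stochastic_average_le[OF rs]
        avoid_prob_le_max)
  also have "\<dots> = avoid_prob P u m j * max_avoid_prob P u n"
    unfolding avoid_prob_def X_def[abs_def] by (simp add: sum_words_cmult mult.commute)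
  finally show ?thesis .
qed

lemma max_avoid_prob_submult:
  assumes "row_stochastic P" and "u \<noteq> []"
  shows "max_avoid_prob P u (m + n + length u) \<le> max_avoid_prob P u m * max_avoid_prob P u n"
proof -
  obtain j where "max_avoid_prob P u (m + n + length u) = avoid_prob P u (m + n + length u) j"
    by (rule max_avoid_prob_attained)
  also have "\<dots> \<le> avoid_prob P u m j * max_avoid_prob P u n"
    by (rule avoid_prob_submult[OF assms])
  also have "\<dots> \<le> max_avoid_prob P u m * max_avoid_prob P u n"
    using avoid_prob_le_max avoid_prob_nonneg[OF assms(1)] order_trans
    by (blast intro: mult_right_mono)
  finally show ?thesis .
qed

lemma avoid_prob_le_1_minus:
  assumes rs: "row_stochastic P" and len: "length v \<le> K + length u - 1"
    and occ: "occurs_at u (j # v) i" and "i \<le> K" and "i + length u \<le> length (j # v)"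
  shows "avoid_prob P u K j \<le> 1 - path_weight P (j # v)"
proof -
  define r where "r = K + length u - 1 - length v"
  define F where "F w = (if avoids u K (j # w) then path_weight P (j # w) else 0)" for w
  have extend: "sum_words r (\<lambda>w. path_weight P ((j # v') @ w)) = path_weight P (j # v')" for v'
    by (rule sum_words_path_weight_extend[OF rs]) simp
  have F_le: "F (v' @ w) \<le> (if v' = v then 0 else path_weight P ((j # v') @ w))" for v' w
  proof (cases "v' = v")
    case True
    then have "occurs_at u ((j # v) @ w) i" using occ occurs_at_append_left assms(5) by blast
    then show ?thesis using True \<open>i \<le> K\<close> by (auto simp: F_def avoids_def)
  qed (simp add: F_def path_weight_nonneg[OF rs])
  have "K + length u - 1 = length v + r" using len by (simp add: r_def)
  then have "avoid_prob P u K j = sum_words (length v + r) F"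
    by (simp add: avoid_prob_def F_def[abs_def])
  also have "\<dots> = sum_words (length v) (\<lambda>v'. sum_words r (\<lambda>w. F (v' @ w)))"
    by (rule sum_words_add)
  also have "\<dots> \<le> sum_words (length v)
      (\<lambda>v'. sum_words r (\<lambda>w. if v' = v then 0 else path_weight P ((j # v') @ w)))"
    by (intro sum_words_mono F_le)
  also have "\<dots> = sum_words (length v) (\<lambda>v'. sum_words r (\<lambda>w. path_weight P ((j # v') @ w))
      - (if v' = v then sum_words r (\<lambda>w. path_weight P ((j # v') @ w)) else 0))"
    by (intro arg_cong[where f = "sum_words _"]) (auto simp: sum_words_def)
  also have "\<dots> = sum_words (length v) (\<lambda>v'. path_weight P ([j] @ v')) - path_weight P (j # v)"
    by (simp only: sum_words_diff extend sum_words_delta[OF refl]) simp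
  also have "\<dots> = 1 - path_weight P (j # v)"
    using sum_words_path_weight_extend[OF rs, of "[j]"] by simp
  finally show ?thesis .
qed

lemma sum_avoiding_words:
  assumes u: "u \<noteq> []"
  shows "(\<Sum>w\<in>{w. length w = m + length u \<and> avoids u m w}. p$(hd w) * path_weight P w)
    = (\<Sum>j\<in>UNIV. p$j * avoid_prob P u m j)"
proof -
  have "{w. length w = m + length u \<and> avoids u m w}
      = {w \<in> {w. length w = m + length u}. avoids u m w}" by auto
  then have "(\<Sum>w\<in>{w. length w = m + length u \<and> avoids u m w}. p$(hd w) * path_weight P w)
      = sum_words (m + length u) (\<lambda>w. if avoids u m w then p$(hd w) * path_weight P w else 0)"
    unfolding sum_words_def by (simp only: sum.inter_filter[OF finite_list_length])
  also have "\<dots> = sum_words (Suc (m + length u - 1))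
      (\<lambda>w. if avoids u m w then p$(hd w) * path_weight P w else 0)"
    using u by simp
  also have "\<dots> = (\<Sum>j\<in>UNIV. sum_words (m + length u - 1)
      (\<lambda>w. p$j * (if avoids u m (j # w) then path_weight P (j # w) else 0)))"
    unfolding sum_words_Suc by (intro sum.cong refl arg_cong[where f = "sum_words _"] ext) simp
  also have "\<dots> = (\<Sum>j\<in>UNIV. p$j * avoid_prob P u m j)"
    by (simp only: avoid_prob_def sum_words_cmult)
  finally show ?thesis .
qed

definition avoiding_expectation ::
  "real^'n^'n \<Rightarrow> 'n \<Rightarrow> ('n \<Rightarrow> real) \<Rightarrow> nat \<Rightarrow> 'n \<Rightarrow> real" where
  "avoiding_expectation P i f n j = sum_words n
     (\<lambda>w. if i \<notin> set (j # w) then path_weight P (j # w) * f (last (j # w)) else 0)"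

lemma avoiding_expectation_0: "avoiding_expectation P i f 0 j = (if j = i then 0 else f j)"
  by (simp add: avoiding_expectation_def)

lemma avoiding_expectation_Suc:
  "avoiding_expectation P i f (Suc n) j =
     (if j = i then 0 else (\<Sum>k\<in>UNIV. P$j$k * avoiding_expectation P i f n k))"
proof -
  have "avoiding_expectation P i f (Suc n) j = (\<Sum>k\<in>UNIV. sum_words n (\<lambda>w. (if j = i then 0
      else P$j$k * (if i \<notin> set (k # w) then path_weight P (k # w) * f (last (k # w)) else 0))))"
    unfolding avoiding_expectation_def sum_words_Suc
    by (intro sum.cong refl arg_cong[where f = "sum_words n"] ext) auto
  then show ?thesis
    by (simp add: avoiding_expectation_def sum_words_cmult sum_words_def sum_distrib_left)
qed

lemma avoiding_expectation_ge_power: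
  assumes rs: "row_stochastic P" and "0 < \<theta>" and "f i = 0"
    and super: "\<And>j. j \<noteq> i \<Longrightarrow> \<theta> * f j \<le> (\<Sum>k\<in>UNIV. P$j$k * f k)"
  shows "\<theta> ^ n * f j \<le> avoiding_expectation P i f n j"
proof (induction n arbitrary: j)
  case 0
  then show ?case using \<open>f i = 0\<close> by (simp add: avoiding_expectation_0)
next
  case (Suc n)
  show ?case
  proof (cases "j = i")
    case False
    have "\<theta> ^ Suc n * f j = \<theta> ^ n * (\<theta> * f j)" by simp
    also have "\<dots> \<le> \<theta> ^ n * (\<Sum>k\<in>UNIV. P$j$k * f k)"
      using super[OF False] \<open>0 < \<theta>\<close> by (simp add: mult_left_mono)
    also have "\<dots> = (\<Sum>k\<in>UNIV. P$j$k * (\<theta> ^ n * f k))"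
      by (simp add: sum_distrib_left algebra_simps)
    also have "\<dots> \<le> (\<Sum>k\<in>UNIV. P$j$k * avoiding_expectation P i f n k)"
      by (intro sum_mono mult_left_mono Suc.IH row_stochastic_nonneg[OF rs])
    finally show ?thesis using False by (simp add: avoiding_expectation_Suc)
  qed (use \<open>f i = 0\<close> in \<open>simp add: avoiding_expectation_Suc\<close>)
qed

text \<open>Avoiding the first letter of \<open>u\<close> for \<open>m + |u| - 1\<close> steps avoids every occurrence
of \<open>u\<close> at the times \<open>0, \<dots>, m\<close>.\<close>

lemma avoid_prob_ge_avoiding_expectation:
  assumes rs: "row_stochastic P" and u: "u \<noteq> []" and "0 < M"
    and f: "\<And>j. 0 \<le> f j" "\<And>j. f j \<le> M"
  shows "avoiding_expectation P (hd u) f (m + length u - 1) j / M \<le> avoid_prob P u m j"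
proof -
  have "avoiding_expectation P (hd u) f (m + length u - 1) j / M = sum_words (m + length u - 1)
      (\<lambda>w. (if hd u \<notin> set (j # w) then path_weight P (j # w) * f (last (j # w)) else 0) / M)"
    unfolding avoiding_expectation_def sum_words_def by (simp add: sum_divide_distrib)
  also have "\<dots> \<le> avoid_prob P u m j"
    unfolding avoid_prob_def
  proof (rule sum_words_mono)
    fix w :: "'a list"
    assume len: "length w = m + length u - 1"
    have avoids: "avoids u m (j # w)" if "hd u \<notin> set (j # w)"
      unfolding avoids_def occurs_at_def
    proof (intro allI impI notI)
      fix i assume "i \<le> m" and "\<forall>k<length u. (j # w) ! (i + k) = u ! k"
      moreover have "i < length (j # w)" using \<open>i \<le> m\<close> len u by (cases u) auto
      ultimately have "hd u \<in> set (j # w)"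
        using u by (metis add_0_right hd_conv_nth length_greater_0_conv nth_mem)
      then show False using that by simp
    qed
    have "path_weight P (j # w) * f (last (j # w)) / M \<le> path_weight P (j # w)"
      using mult_left_mono[of "f (last (j # w)) / M" 1 "path_weight P (j # w)"]
        f \<open>0 < M\<close> path_weight_nonneg[OF rs] by simp
    then show "(if hd u \<notin> set (j # w) then path_weight P (j # w) * f (last (j # w)) else 0) / M
        \<le> (if avoids u m (j # w) then path_weight P (j # w) else 0)"
      using avoids path_weight_nonneg[OF rs] by auto
  qed
  finally show ?thesis .
qed

lemma stationary_vector_orthogonal_eigenvector:
  assumes "stationary_vector P p" and "P *v v = \<theta> *\<^sub>R v" and "\<theta> \<noteq> 1"
  shows "p \<bullet> v = 0"
proof -
  have "\<theta> * (p \<bullet> v) = p \<bullet> (P *v v)" using assms(2) by simp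
  also have "\<dots> = p \<bullet> v"
    using assms(1) by (simp add: dot_lmul_matrix[symmetric] stationary_vector_def)
  finally show ?thesis using assms(3) by simp
qed

lemma orthogonal_to_positive_has_positive_entry:
  fixes p w :: "real^'n"
  assumes "p \<bullet> w = 0" and "\<And>j. 0 < p$j" and "w \<noteq> 0"
  obtains j where "0 < w$j"
proof (rule ccontr)
  assume "\<not> thesis"
  then have nonpos: "w$j \<le> 0" for j using that by (meson not_le)
  have "\<forall>j\<in>UNIV. - (p$j * w$j) = 0"
  proof (rule sum_nonneg_eq_0_iff[THEN iffD1])
    show "(\<Sum>j\<in>UNIV. - (p$j * w$j)) = 0" using assms(1) by (simp add: inner_vec_def sum_negf)
  qed (use nonpos assms(2) in \<open>auto simp: mult_nonneg_nonpos less_imp_le\<close>)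
  then have "w = 0" using assms(2) by (simp add: vec_eq_iff) (metis less_irrefl)
  then show False using assms(3) by simp
qed

text \<open>The eigenvector \<open>w\<close> is orthogonal to \<open>p > 0\<close>, so its positive part is nonzero, and
\<open>P \<ge> 0\<close> gives \<open>\<theta> w\<^sup>+ = (P w)\<^sup>+ \<le> P w\<^sup>+\<close>; the sign of \<open>w\<close> is chosen so that \<open>w(i) \<le> 0\<close>.\<close>

lemma eigenvector_positive_part:
  assumes rs: "row_stochastic P" and st: "stationary_vector P p" and p: "\<And>j. 0 < p$j"
    and "real_eigenvalue P \<theta>" and "0 < \<theta>" and "\<theta> \<noteq> 1"
  obtains f j0 where "\<And>j. 0 \<le> f j" and "f i = 0" and "0 < f j0"
    and "\<And>j. \<theta> * f j \<le> (\<Sum>k\<in>UNIV. P$j$k * f k)"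
proof -
  obtain v where v: "v \<noteq> 0" "P *v v = \<theta> *\<^sub>R v"
    using \<open>real_eigenvalue P \<theta>\<close> unfolding real_eigenvalue_def by blast
  define w where "w = (if v$i \<le> 0 then 1 else -1) *\<^sub>R v"
  have w: "w \<noteq> 0" "P *v w = \<theta> *\<^sub>R w" "w$i \<le> 0"
    using v by (auto simp: w_def matrix_vector_mult_scaleR)
  obtain j0 where "0 < w$j0"
    using orthogonal_to_positive_has_positive_entry
      stationary_vector_orthogonal_eigenvector[OF st w(2) \<open>\<theta> \<noteq> 1\<close>] p w(1) by blast
  show thesis
  proof (rule that[of "\<lambda>j. max (w$j) 0" j0])
    fix j
    have "\<theta> * max (w$j) 0 = max (\<Sum>k\<in>UNIV. P$j$k * w$k) 0"
      using arg_cong[OF w(2), of "\<lambda>x. x$j"] \<open>0 < \<theta>\<close>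
      by (simp add: matrix_vector_mult_def max_mult_distrib_left)
    also have "\<dots> \<le> (\<Sum>k\<in>UNIV. P$j$k * max (w$k) 0)"
      by (intro max.boundedI sum_mono mult_left_mono sum_nonneg mult_nonneg_nonneg)
        (auto simp: row_stochastic_nonneg[OF rs])
    finally show "\<theta> * max (w$j) 0 \<le> (\<Sum>k\<in>UNIV. P$j$k * max (w$k) 0)" .
  qed (use w(3) \<open>0 < w$j0\<close> in auto)
qed

lemma max_avoid_prob_lower_bound:
  assumes rs: "row_stochastic P" and st: "stationary_vector P p" and p: "\<And>j. 0 < p$j"
    and ev: "real_eigenvalue P \<theta>" and "0 < \<theta>" and "\<theta> \<noteq> 1" and u: "u \<noteq> []"
  obtains c where "0 < c" and "\<And>m. c * \<theta> ^ (m + length u - 1) \<le> max_avoid_prob P u m"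
proof -
  obtain f j0 where f: "\<And>j. 0 \<le> f j" "f (hd u) = 0" "0 < f j0"
    and super: "\<And>j. \<theta> * f j \<le> (\<Sum>k\<in>UNIV. P$j$k * f k)"
    using eigenvector_positive_part[OF rs st p ev \<open>0 < \<theta>\<close> \<open>\<theta> \<noteq> 1\<close>] by metis
  define M where "M = Max (range f)"
  have fM: "f j \<le> M" for j unfolding M_def by (rule Max_ge) auto
  have "0 < M" using fM[of j0] f(3) by simp
  show thesis
  proof (rule that)
    show "0 < f j0 / M" using f(3) \<open>0 < M\<close> by simp
  next
    fix m
    let ?n = "m + length u - 1"
    have "f j0 / M * \<theta> ^ ?n = \<theta> ^ ?n * f j0 / M" by simp
    also have "\<dots> \<le> avoiding_expectation P (hd u) f ?n j0 / M"
      using avoiding_expectation_ge_power[OF rs \<open>0 < \<theta>\<close> f(2) super] \<open>0 < M\<close>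
      by (simp add: divide_right_mono)
    also have "\<dots> \<le> avoid_prob P u m j0"
      by (rule avoid_prob_ge_avoiding_expectation[OF rs u \<open>0 < M\<close> f(1) fM])
    also have "\<dots> \<le> max_avoid_prob P u m" by (rule avoid_prob_le_max)
    finally show "f j0 / M * \<theta> ^ ?n \<le> max_avoid_prob P u m" .
  qed
qed

lemma mat_power_pos_imp_path:
  assumes zo: "zero_one_matrix A" and pa: "\<forall>i j. 0 < P$i$j \<longleftrightarrow> A$i$j = 1"
  shows "0 < mat_power A k $ i $ j \<Longrightarrow>
           \<exists>w. length w = k \<and> last (i # w) = j \<and> 0 < path_weight P (i # w)"
proof (induction k arbitrary: j)
  case 0
  then have "i = j" by (simp add: mat_power_def mat_def split: if_splits)
  then show ?case by (intro exI[of _ "[]"]) simp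
next
  case (Suc k)
  have "0 < (\<Sum>l\<in>UNIV. mat_power A k $ i $ l * A$l$j)"
    using Suc.prems by (simp add: mat_power_def matrix_matrix_mult_def)
  then obtain l where l: "0 < mat_power A k $ i $ l * A$l$j"
    by (metis (no_types, lifting) not_le sum_nonpos)
  then have "A$l$j = 1" using zo unfolding zero_one_matrix_def by (metis mult_zero_right less_irrefl)
  with l obtain w where w: "length w = k" "last (i # w) = l" "0 < path_weight P (i # w)"
    using Suc.IH by auto
  have "path_weight P ((i # w) @ [j]) = path_weight P (i # w) * P$l$j"
    using path_weight_snoc[of "i # w" P j] w by simp
  with w \<open>A$l$j = 1\<close> pa have "0 < path_weight P (i # w @ [j])" by simp
  then show ?case using w by (intro exI[of _ "w @ [j]"]) simp
qed

lemma irreducible_path: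
  assumes "zero_one_matrix A" and "irreducible_matrix A" and "\<forall>i j. 0 < P$i$j \<longleftrightarrow> A$i$j = 1"
  obtains w where "last (i # w) = j" and "0 < path_weight P (i # w)"
proof -
  obtain k where "0 < mat_power A k $ i $ j"
    using assms(2) unfolding irreducible_matrix_def by blast
  then show thesis using mat_power_pos_imp_path[OF assms(1,3)] that by blast
qed

lemma stationary_vector_component:
  assumes "stationary_vector P p"
  shows "p$j = (\<Sum>i\<in>UNIV. p$i * P$i$j)"
proof -
  have "p$j = (p v* P)$j" using assms by (simp add: stationary_vector_def)
  then show ?thesis by (simp add: vector_matrix_mult_def)
qed

lemma stationary_vector_zero_backward:
  assumes rs: "row_stochastic P" and st: "stationary_vector P p"
  shows "0 < path_weight P (i # w) \<Longrightarrow> p$(last (i # w)) = 0 \<Longrightarrow> p$i = 0"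
proof (induction w arbitrary: i)
  case (Cons k w)
  have "0 < P$i$k" and "0 < path_weight P (k # w)"
    using Cons.prems(1) path_weight_pos_iff[OF rs, of "i # k # w"]
      path_weight_pos_iff[OF rs, of "k # w"] by auto
  then have "p$k = 0" using Cons by simp
  have p_nonneg: "0 \<le> p$l" for l using st by (simp add: stationary_vector_def)
  have "p$i * P$i$k \<le> (\<Sum>l\<in>UNIV. p$l * P$l$k)"
    by (rule member_le_sum) (auto simp: p_nonneg row_stochastic_nonneg[OF rs])
  also have "\<dots> = 0" using stationary_vector_component[OF st, of k] \<open>p$k = 0\<close> by simp
  finally show ?case using \<open>0 < P$i$k\<close> p_nonneg[of i] by (simp add: mult_le_0_iff)
qed simp

lemma stationary_vector_pos:
  assumes "zero_one_matrix A" and "irreducible_matrix A" and "row_stochastic P"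
    and "\<forall>i j. 0 < P$i$j \<longleftrightarrow> A$i$j = 1" and st: "stationary_vector P p"
  shows "0 < p$j"
proof (rule ccontr)
  assume "\<not> 0 < p$j"
  then have "p$j = 0" using st unfolding stationary_vector_def by (meson not_le order_antisym)
  have "p$i = 0" for i
  proof -
    obtain w where "last (i # w) = j" and "0 < path_weight P (i # w)"
      using irreducible_path assms(1,2,4) by blast
    then show ?thesis using stationary_vector_zero_backward assms(3) st \<open>p$j = 0\<close> by metis
  qed
  then show False using st unfolding stationary_vector_def by simp
qed

lemma occurs_at_glue:
  assumes "v \<noteq> []" and "u \<noteq> []" and "last v = hd u"
  shows "occurs_at u (v @ tl u) (length v - 1)"
  unfolding occurs_at_def
proof (intro allI impI)
  fix k assume "k < length u"
  show "(v @ tl u) ! (length v - 1 + k) = u ! k"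
  proof (cases k)
    case 0
    then show ?thesis using assms by (simp add: nth_append last_conv_nth hd_conv_nth)
  next
    case (Suc k')
    then have "length v - 1 + k = length v + k'" using assms(1) by (cases v) auto
    then show ?thesis using Suc assms(2) by (cases u) (auto simp: nth_append)
  qed
qed

text \<open>By irreducibility every state reaches \<open>hd u\<close> within \<open>K\<close> steps, and then continues
along \<open>u\<close> with positive probability.\<close>

lemma max_avoid_prob_less_1:
  assumes zo: "zero_one_matrix A" and irr: "irreducible_matrix A" and rs: "row_stochastic P"
    and pa: "\<forall>i j. 0 < P$i$j \<longleftrightarrow> A$i$j = 1" and u: "u \<noteq> []" and "0 < path_weight P u"
  obtains K where "max_avoid_prob P u K < 1"
proof -
  have "\<exists>w. last (j # w) = hd u \<and> 0 < path_weight P (j # w)" for j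
    using irreducible_path[OF zo irr pa] by blast
  then obtain wf where wf: "\<And>j. last (j # wf j) = hd u" "\<And>j. 0 < path_weight P (j # wf j)"
    by metis
  define K where "K = Max (range (\<lambda>j. length (wf j)))"
  have K: "length (wf j) \<le> K" for j unfolding K_def by (rule Max_ge) auto
  have "avoid_prob P u K j < 1" for j
  proof -
    have occ: "occurs_at u (j # (wf j @ tl u)) (length (wf j))"
      using occurs_at_glue[of "j # wf j" u] wf(1) u by simp
    have "avoid_prob P u K j \<le> 1 - path_weight P (j # (wf j @ tl u))"
      by (rule avoid_prob_le_1_minus[OF rs _ occ]) (use K[of j] u in \<open>auto simp: Suc_le_eq\<close>)
    moreover have "0 < path_weight P (j # (wf j @ tl u))"
      using path_weight_glue[of "j # wf j" u P] wf u \<open>0 < path_weight P u\<close> by simp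
    ultimately show ?thesis by simp
  qed
  moreover obtain j where "max_avoid_prob P u K = avoid_prob P u K j"
    by (rule max_avoid_prob_attained)
  ultimately show thesis by (intro that[of K]) simp
qed

lemma shifted_subadditive_iterate:
  fixes d :: "nat \<Rightarrow> real"
  assumes "\<And>m n. d (m + n + L) \<le> d m + d n"
  shows "d (q * (m + L) + r) \<le> real q * d m + d r"
proof (induction q)
  case (Suc q)
  have "Suc q * (m + L) + r = m + (q * (m + L) + r) + L" by simp
  then have "d (Suc q * (m + L) + r) \<le> d m + d (q * (m + L) + r)" using assms by metis
  then show ?case using Suc by (simp add: algebra_simps)
qed simp

lemma shifted_subadditive_quotient_le:
  fixes d :: "nat \<Rightarrow> real"
  assumes sub: "\<And>m n. d (m + n + L) \<le> d m + d n" and nonpos: "\<And>n. d n \<le> 0"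
    and "1 \<le> L" and "1 \<le> n"
  shows "d n / real n \<le> d m / real (m + L) - d m / real n"
proof -
  define q where "q = n div (m + L)"
  define r where "r = n mod (m + L)"
  have n: "n = q * (m + L) + r" unfolding q_def r_def by (rule div_mult_mod_eq[symmetric])
  have "d n \<le> real q * d m"
    using shifted_subadditive_iterate[of d L, OF sub, of q m r] nonpos[of r] n by simp
  moreover have "real n / real (m + L) - 1 \<le> real q"
  proof -
    have "r < m + L" unfolding r_def using \<open>1 \<le> L\<close> by simp
    then have "real n \<le> real q * real (m + L) + real (m + L)" using n
      by (metis add_le_mono le_refl less_imp_le of_nat_add of_nat_le_iff of_nat_mult)
    then show ?thesis using \<open>1 \<le> L\<close> by (simp add: field_simps)
  qed
  ultimately have "d n \<le> (real n / real (m + L) - 1) * d m"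
    using nonpos[of m] by (smt (verit) mult_right_mono_neg)
  then have "d n / real n \<le> (real n / real (m + L) - 1) * d m / real n"
    using \<open>1 \<le> n\<close> by (simp add: divide_right_mono)
  also have "\<dots> = d m / real (m + L) - d m / real n" using \<open>1 \<le> n\<close> by (simp add: field_simps)
  finally show ?thesis .
qed

lemma fekete_shifted:
  fixes d :: "nat \<Rightarrow> real"
  assumes sub: "\<And>m n. d (m + n + L) \<le> d m + d n" and nonpos: "\<And>n. d n \<le> 0"
    and L: "1 \<le> L" and bdd: "bdd_below (range (\<lambda>m. d m / real (m + L)))"
  shows "(\<lambda>n. d n / real n) \<longlonglongrightarrow> (INF m. d m / real (m + L))"
proof (rule LIMSEQ_I)
  define l where "l = (INF m. d m / real (m + L))"
  have l_le: "l \<le> d m / real (m + L)" for m unfolding l_def by (rule cINF_lower[OF bdd]) simp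
  fix e :: real
  assume "0 < e"
  then obtain m where m: "d m / real (m + L) < l + e / 2"
    using cINF_less_iff[of UNIV "\<lambda>m. d m / real (m + L)" "l + e / 2"] bdd
    unfolding l_def by auto
  obtain N1 :: nat where N1: "- d m * 2 / e < real N1" using reals_Archimedean2 by blast
  obtain N2 :: nat where N2: "\<bar>l\<bar> * real L * 2 / e < real N2" using reals_Archimedean2 by blast
  have "norm (d n / real n - l) < e" if n: "max 1 (max N1 N2) \<le> n" for n
  proof -
    have "0 < real n" and "real N1 \<le> real n" and "real N2 \<le> real n" using n by auto
    then have "- d m * 2 / e < real n" and "\<bar>l\<bar> * real L * 2 / e < real n" using N1 N2 by auto
    then have "- d m / real n < e / 2" and "\<bar>l * real L / real n\<bar> < e / 2"
      using \<open>0 < e\<close> \<open>0 < real n\<close> by (simp_all add: abs_mult field_simps)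
    moreover have "d n / real n \<le> d m / real (m + L) - d m / real n"
      using shifted_subadditive_quotient_le[of d L, OF sub nonpos L, of n m] n by simp
    ultimately have upper: "d n / real n < l + e" using m by linarith
    have "l * (real (n + L) / real n) \<le> d n / real (n + L) * (real (n + L) / real n)"
      using l_le[of n] \<open>0 < real n\<close> by (intro mult_right_mono) auto
    also have "\<dots> = d n / real n" using L by simp
    finally have "l + l * real L / real n \<le> d n / real n"
      using \<open>0 < real n\<close> by (simp add: field_simps)
    moreover have "- (l * real L / real n) < e / 2"
      using \<open>\<bar>l * real L / real n\<bar> < e / 2\<close> abs_less_iff by blast
    ultimately show ?thesis using upper unfolding real_norm_def abs_less_iff by linarith
  qed
  then show "\<exists>N. \<forall>n\<ge>N. norm (d n / real n - (INF m. d m / real (m + L))) < e"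
    unfolding l_def by blast
qed

lemma bdd_below_shifted_quotient:
  fixes d :: "nat \<Rightarrow> real"
  assumes low: "\<And>m. a + real m * b \<le> d m" and L: "1 \<le> L"
  shows "bdd_below (range (\<lambda>m. d m / real (m + L)))"
proof (rule bdd_belowI2)
  fix m
  have "real (m + L) * (\<bar>a\<bar> + \<bar>b\<bar>)
      = \<bar>a\<bar> * real L + \<bar>a\<bar> * real m + real m * \<bar>b\<bar> + real L * \<bar>b\<bar>"
    by (simp add: algebra_simps)
  moreover have "\<bar>a\<bar> \<le> \<bar>a\<bar> * real L" using L by (simp add: mult_le_cancel_left1)
  moreover have "- (real m * b) \<le> real m * \<bar>b\<bar>"
    using abs_ge_minus_self[of "real m * b"] by (simp add: abs_mult)
  ultimately have "- (real (m + L) * (\<bar>a\<bar> + \<bar>b\<bar>)) \<le> a + real m * b"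
    using abs_ge_minus_self[of a] by (smt (verit) mult_nonneg_nonneg of_nat_0_le_iff abs_ge_zero)
  then show "- (\<bar>a\<bar> + \<bar>b\<bar>) \<le> d m / real (m + L)" using low[of m] L by (simp add: field_simps)
qed

lemma log_rate_of_submultiplicative:
  fixes G :: "nat \<Rightarrow> real"
  assumes sub: "\<And>m n. G (m + n + L) \<le> G m * G n" and L: "1 \<le> L" and le1: "\<And>m. G m \<le> 1"
    and "0 < c" and "0 < \<theta>" and low: "\<And>m. c * \<theta> ^ (m + L - 1) \<le> G m" and "G K < 1"
  obtains l where "(\<lambda>m. ln (G m) / real m) \<longlonglongrightarrow> l" and "l < 0" and "ln \<theta> \<le> l"
proof -
  have pos: "0 < G m" for m using low[of m] \<open>0 < c\<close> \<open>0 < \<theta>\<close> by (smt (verit) mult_pos_pos zero_less_power)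
  define d where "d m = ln (G m)" for m
  define a where "a = ln c + (real L - 1) * ln \<theta>"
  have sub_d: "d (m + n + L) \<le> d m + d n" for m n
    using sub[of m n] pos[of m] pos[of n] pos[of "m + n + L"] by (simp add: d_def ln_mult_pos[symmetric])
  have nonpos: "d m \<le> 0" for m using le1[of m] pos[of m] by (simp add: d_def)
  have low_d: "a + real m * ln \<theta> \<le> d m" for m
  proof -
    have "ln (c * \<theta> ^ (m + L - 1)) \<le> d m"
      unfolding d_def using low[of m] \<open>0 < c\<close> \<open>0 < \<theta>\<close> by (intro ln_mono) auto
    moreover have "ln (c * \<theta> ^ (m + L - 1)) = a + real m * ln \<theta>"
      using \<open>0 < c\<close> \<open>0 < \<theta>\<close> L by (simp add: a_def ln_mult ln_realpow of_nat_diff algebra_simps)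
    ultimately show ?thesis by simp
  qed
  have bdd: "bdd_below (range (\<lambda>m. d m / real (m + L)))"
    by (rule bdd_below_shifted_quotient[OF low_d L])
  define l where "l = (INF m. d m / real (m + L))"
  have lim: "(\<lambda>m. d m / real m) \<longlonglongrightarrow> l"
    unfolding l_def by (rule fekete_shifted[OF sub_d nonpos L bdd])
  show thesis
  proof (rule that)
    show "(\<lambda>m. ln (G m) / real m) \<longlonglongrightarrow> l" using lim by (simp add: d_def)
    have "l \<le> d K / real (K + L)" unfolding l_def by (rule cINF_lower[OF bdd]) simp
    also have "\<dots> < 0" using \<open>G K < 1\<close> pos[of K] L by (simp add: d_def divide_neg_pos)
    finally show "l < 0" .
    show "ln \<theta> \<le> l"
    proof (rule LIMSEQ_le[OF _ lim])
      show "(\<lambda>m. a / real m + ln \<theta>) \<longlonglongrightarrow> ln \<theta>"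
        using tendsto_add[OF lim_const_over_n[of a] tendsto_const[of "ln \<theta>"]] by simp
      have "a / real m + ln \<theta> \<le> d m / real m" if "1 \<le> m" for m
      proof -
        have "a / real m + ln \<theta> = (a + real m * ln \<theta>) / real m" using that by (simp add: field_simps)
        also have "\<dots> \<le> d m / real m" using low_d[of m] by (simp add: divide_right_mono)
        finally show ?thesis .
      qed
      then show "\<exists>N. \<forall>m\<ge>N. a / real m + ln \<theta> \<le> d m / real m" by blast
    qed
  qed
qed

lemma log_rate_of_comparable:
  fixes G a :: "nat \<Rightarrow> real"
  assumes lim: "(\<lambda>m. ln (G m) / real m) \<longlonglongrightarrow> l" and "0 < b" and pos: "\<And>m. 0 < G m"
    and lower: "\<And>m. b * G m \<le> a m" and upper: "\<And>m. a m \<le> G m"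
  shows "(\<lambda>m. ln (a m) / real m) \<longlonglongrightarrow> l"
proof -
  have "\<bar>ln (a m) - ln (G m)\<bar> \<le> \<bar>ln b\<bar>" for m
  proof -
    have "0 < b * G m" using \<open>0 < b\<close> pos[of m] by simp
    then have "0 < a m" using lower[of m] by linarith
    then have "ln b + ln (G m) \<le> ln (a m)" and "ln (a m) \<le> ln (G m)"
      using lower[of m] upper[of m] \<open>0 < b\<close> pos[of m] by (simp_all add: ln_mult_pos[symmetric])
    then show ?thesis by linarith
  qed
  then have "(\<lambda>m. (ln (a m) - ln (G m)) / real m) \<longlonglongrightarrow> 0"
    by (intro Lim_null_comparison[OF _ lim_const_over_n[of "\<bar>ln b\<bar>"]] always_eventually allI)
      (simp add: abs_divide divide_right_mono)
  from tendsto_add[OF this lim] show ?thesis by (simp add: diff_divide_distrib)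
qed

lemma shift_power: "(shift ^^ i) x = (\<lambda>n. x (n + i))"
  by (induction i arbitrary: x) (auto simp: shift_def funpow_Suc_right)

lemma cylinder_imp_allowed_word: "x \<in> cylinder A w \<Longrightarrow> allowed_word A w"
  unfolding cylinder_def allowed_word_def by (metis (mono_tags, lifting) add_0 mem_Collect_eq)

lemma allowed_word_path_weight_pos:
  assumes rs: "row_stochastic P" and pa: "\<forall>i j. 0 < P$i$j \<longleftrightarrow> A$i$j = 1"
    and "allowed_word A w"
  shows "0 < path_weight P w"
proof -
  obtain x k where x: "x \<in> shift_space A" "\<forall>i<length w. x (k + i) = w ! i"
    using \<open>allowed_word A w\<close> unfolding allowed_word_def by blast
  have "0 < P$(w!i)$(w!Suc i)" if "Suc i < length w" for i
  proof -
    have "A$(x (k + i))$(x (Suc (k + i))) = 1" using x(1) unfolding shift_space_def by blast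
    then show ?thesis using x(2) that pa by (metis Suc_lessD add_Suc_right)
  qed
  then show ?thesis using path_weight_pos_iff[OF rs] by blast
qed

lemma row_stochastic_successor:
  assumes rs: "row_stochastic P" and pa: "\<forall>i j. 0 < P$i$j \<longleftrightarrow> A$i$j = 1"
  shows "\<exists>j. A$i$j = 1"
proof (rule ccontr)
  assume "\<nexists>j. A$i$j = 1"
  then have "P$i$j = 0" for j using pa row_stochastic_nonneg[OF rs, of i j] by (metis order_le_less)
  then show False using row_stochastic_sum[OF rs, of i] by simp
qed

lemma cylinder_nonempty:
  assumes rs: "row_stochastic P" and pa: "\<forall>i j. 0 < P$i$j \<longleftrightarrow> A$i$j = 1"
    and "w \<noteq> []" and "0 < path_weight P w"
  shows "cylinder A w \<noteq> {}"
proof -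
  obtain s where s: "\<And>i. A$i$(s i) = 1" using row_stochastic_successor[OF rs pa] by metis
  have step: "A$(w!i)$(w!Suc i) = 1" if "Suc i < length w" for i
    using \<open>0 < path_weight P w\<close> path_weight_pos_iff[OF rs, of w] pa that by blast
  define x where "x n = (if n < length w then w!n else (s ^^ (n - length w + 1)) (last w))" for n
  have "A$(x n)$(x (Suc n)) = 1" for n
  proof -
    consider "Suc n < length w" | "Suc n = length w" | "length w \<le> n" by linarith
    then show ?thesis
    proof cases
      case 2
      then have "n = length w - 1" by simp
      then have "x n = last w" and "x (Suc n) = s (last w)"
        using 2 \<open>w \<noteq> []\<close> by (simp_all add: x_def last_conv_nth)
      then show ?thesis using s by simp
    next
      case 3
      then have "x (Suc n) = s (x n)" by (simp add: x_def Suc_diff_le)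
      then show ?thesis using s by simp
    qed (simp add: x_def step)
  qed
  then have "x \<in> cylinder A w" by (simp add: cylinder_def shift_space_def x_def)
  then show ?thesis by blast
qed

lemma cylinders_disjoint:
  assumes "length v = length w" and "v \<noteq> w"
  shows "cylinder A v \<inter> cylinder A w = {}"
proof (rule ccontr)
  assume "cylinder A v \<inter> cylinder A w \<noteq> {}"
  then obtain x where "x \<in> cylinder A v" and "x \<in> cylinder A w" by blast
  then have "v ! i = w ! i" if "i < length v" for i using that assms(1) by (simp add: cylinder_def)
  with assms show False by (metis nth_equalityI)
qed

abbreviation (input) sequence_space :: "(nat \<Rightarrow> 'a) measure" where
  "sequence_space \<equiv> Pi\<^sub>M UNIV (\<lambda>_. count_space UNIV)"

lemma space_sequence_space: "space sequence_space = UNIV"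
  by (simp add: space_PiM)

lemma sets_cylinder: "cylinder A w \<in> sets sequence_space"
proof -
  have "{x \<in> space sequence_space. (\<forall>n. A$(x n)$(x (Suc n)) = 1) \<and> (\<forall>i<length w. x i = w!i)}
      \<in> sets sequence_space"
    by measurable
  then show ?thesis by (simp add: space_sequence_space cylinder_def shift_space_def)
qed

lemma sets_shift_space: "shift_space A \<in> sets sequence_space"
proof -
  have "{x \<in> space sequence_space. \<forall>n. A$(x n)$(x (Suc n)) = 1} \<in> sets sequence_space"
    by measurable
  then show ?thesis by (simp add: space_sequence_space shift_space_def)
qed

lemma sets_survivors_cylinder: "survivors (cylinder A u) m \<in> sets sequence_space"
proof -
  have "{x \<in> space sequence_space. \<forall>i\<le>m. \<not> ((\<forall>n. A$(x (n + i))$(x (Suc n + i)) = 1)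
      \<and> (\<forall>k<length u. x (k + i) = u!k))} \<in> sets sequence_space"
    by measurable
  then show ?thesis
    by (simp add: space_sequence_space survivors_def shift_power cylinder_def shift_space_def)
qed

lemma survivors_Int_shift_space:
  "survivors (cylinder A u) m \<inter> shift_space A
     = (\<Union>w\<in>{w. length w = m + length u \<and> avoids u m w}. cylinder A w)"
proof (intro equalityI subsetI)
  fix x assume x: "x \<in> survivors (cylinder A u) m \<inter> shift_space A"
  define w where "w = map x [0..<m + length u]"
  have "\<not> occurs_at u w i" if "i \<le> m" for i
  proof
    assume "occurs_at u w i"
    then have "(shift ^^ i) x \<in> cylinder A u"
      using x that by (auto simp: occurs_at_def w_def shift_power cylinder_def shift_space_def add.commute)
    then show False using x that by (simp add: survivors_def)
  qed
  moreover have "x \<in> cylinder A w" using x by (auto simp: cylinder_def w_def)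
  ultimately show "x \<in> (\<Union>w\<in>{w. length w = m + length u \<and> avoids u m w}. cylinder A w)"
    by (intro UN_I[of w]) (auto simp: w_def avoids_def)
next
  fix x assume "x \<in> (\<Union>w\<in>{w. length w = m + length u \<and> avoids u m w}. cylinder A w)"
  then obtain w where w: "length w = m + length u" "avoids u m w" "x \<in> cylinder A w" by blast
  have "(shift ^^ i) x \<notin> cylinder A u" if "i \<le> m" for i
  proof
    assume "(shift ^^ i) x \<in> cylinder A u"
    then have "occurs_at u w i"
      using w(1,3) that by (auto simp: occurs_at_def shift_power cylinder_def add.commute)
    then show False using w(2) that by (simp add: avoids_def)
  qed
  then show "x \<in> survivors (cylinder A u) m \<inter> shift_space A"
    using w(3) by (simp add: survivors_def cylinder_def)
qed

lemma markov_measure_cylinder: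
  assumes rs: "row_stochastic P" and pa: "\<forall>i j. 0 < P$i$j \<longleftrightarrow> A$i$j = 1"
    and mu: "is_markov_measure A P p \<mu>" and "w \<noteq> []"
  shows "measure \<mu> (cylinder A w) = p$(hd w) * path_weight P w"
proof (cases "allowed_word A w")
  case True
  then show ?thesis using mu \<open>w \<noteq> []\<close>
    by (simp add: is_markov_measure_def markov_weight_def path_weight_eq_prod hd_conv_nth)
next
  case False
  then have "cylinder A w = {}" using cylinder_imp_allowed_word by blast
  moreover have "path_weight P w = 0"
    using cylinder_nonempty[OF rs pa \<open>w \<noteq> []\<close>] path_weight_nonneg[OF rs, of w] \<open>cylinder A w = {}\<close>
    by force
  ultimately show ?thesis by simp
qed

lemma markov_measure_shift_space:
  assumes rs: "row_stochastic P" and pa: "\<forall>i j. 0 < P$i$j \<longleftrightarrow> A$i$j = 1"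
    and mu: "is_markov_measure A P p \<mu>" and st: "stationary_vector P p"
  shows "measure \<mu> (shift_space A) = 1"
proof -
  interpret prob_space \<mu> using mu by (simp add: is_markov_measure_def)
  have "shift_space A = (\<Union>j. cylinder A [j])" by (auto simp: cylinder_def)
  moreover have "disjoint_family (\<lambda>j. cylinder A [j])"
    by (auto simp: disjoint_family_on_def cylinder_def)
  moreover have "cylinder A w \<in> events" for w
    using mu sets_cylinder by (simp add: is_markov_measure_def)
  ultimately have "prob (shift_space A) = (\<Sum>j\<in>UNIV. prob (cylinder A [j]))"
    using finite_measure_finite_Union[of UNIV "\<lambda>j. cylinder A [j]"] by auto
  also have "\<dots> = 1"
    using st by (simp add: markov_measure_cylinder[OF rs pa mu] stationary_vector_def)
  finally show ?thesis .
qed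

lemma markov_measure_survivors:
  assumes rs: "row_stochastic P" and pa: "\<forall>i j. 0 < P$i$j \<longleftrightarrow> A$i$j = 1"
    and mu: "is_markov_measure A P p \<mu>" and st: "stationary_vector P p" and u: "u \<noteq> []"
  shows "measure \<mu> (survivors (cylinder A u) m) = (\<Sum>j\<in>UNIV. p$j * avoid_prob P u m j)"
proof -
  interpret prob_space \<mu> using mu by (simp add: is_markov_measure_def)
  let ?S = "survivors (cylinder A u) m" and ?O = "shift_space A"
  let ?W = "{w. length w = m + length u \<and> avoids u m w}"
  have sets: "sets \<mu> = sets sequence_space" using mu by (simp add: is_markov_measure_def)
  have meas: "cylinder A w \<in> events" "?O \<in> events" "?S \<in> events" for w
    using sets_cylinder sets_shift_space sets_survivors_cylinder sets by blast+
  have cylinder: "measure \<mu> (cylinder A w) = p$(hd w) * path_weight P w" if "w \<noteq> []" for w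
    by (rule markov_measure_cylinder[OF rs pa mu that])
  have "prob ?O = 1" by (rule markov_measure_shift_space[OF rs pa mu st])
  then have "AE x in \<mu>. x \<in> ?O" by (rule AE_prob_1)
  then have "prob ?S = prob (?S \<inter> ?O)"
    using meas by (intro measure_eq_AE) (auto elim: eventually_mono)
  also have "\<dots> = (\<Sum>w\<in>?W. prob (cylinder A w))"
    unfolding survivors_Int_shift_space
  proof (rule finite_measure_finite_Union)
    show "finite ?W" using finite_list_length by (rule rev_finite_subset) auto
    show "disjoint_family_on (cylinder A) ?W"
      unfolding disjoint_family_on_def
    proof (intro ballI impI)
      fix v w assume "v \<in> ?W" and "w \<in> ?W" and "v \<noteq> w"
      then show "cylinder A v \<inter> cylinder A w = {}" by (simp add: cylinders_disjoint)
    qed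
  qed (use meas in auto)
  also have "\<dots> = (\<Sum>w\<in>?W. p$(hd w) * path_weight P w)"
    by (rule sum.cong[OF refl], rule cylinder) (use u in auto)
  also have "\<dots> = (\<Sum>j\<in>UNIV. p$j * avoid_prob P u m j)"
    by (rule sum_avoiding_words[OF u])
  finally show ?thesis .
qed

lemma max_avoid_prob_weighted_bounds:
  assumes rs: "row_stochastic P" and st: "stationary_vector P p" and b: "\<And>j. b \<le> p$j"
  shows "b * max_avoid_prob P u m \<le> (\<Sum>j\<in>UNIV. p$j * avoid_prob P u m j)"
    and "(\<Sum>j\<in>UNIV. p$j * avoid_prob P u m j) \<le> max_avoid_prob P u m"
proof -
  have p: "0 \<le> p$j" for j using st by (simp add: stationary_vector_def)
  obtain j where j: "max_avoid_prob P u m = avoid_prob P u m j" by (rule max_avoid_prob_attained)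
  have "b * avoid_prob P u m j \<le> p$j * avoid_prob P u m j"
    by (intro mult_right_mono b avoid_prob_nonneg[OF rs])
  also have "\<dots> \<le> (\<Sum>j\<in>UNIV. p$j * avoid_prob P u m j)"
    by (rule member_le_sum) (auto intro: mult_nonneg_nonneg p avoid_prob_nonneg[OF rs])
  finally show "b * max_avoid_prob P u m \<le> (\<Sum>j\<in>UNIV. p$j * avoid_prob P u m j)" by (simp add: j)
  have "(\<Sum>j\<in>UNIV. p$j * avoid_prob P u m j) \<le> (\<Sum>j\<in>UNIV. p$j * max_avoid_prob P u m)"
    by (intro sum_mono mult_left_mono p avoid_prob_le_max)
  also have "\<dots> = max_avoid_prob P u m"
    using st by (simp add: stationary_vector_def sum_distrib_right[symmetric])
  finally show "(\<Sum>j\<in>UNIV. p$j * avoid_prob P u m j) \<le> max_avoid_prob P u m" .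
qed

theorem theorem3p4:
  fixes A P :: "real^'n^'n" and p :: "real^'n" and \<mu> :: "(nat \<Rightarrow> 'n) measure"
    and \<theta> :: real and u :: "'n list"
  assumes "zero_one_matrix A" and "irreducible_matrix A"
    and "row_stochastic P" and "\<forall>i j. P$i$j > 0 \<longleftrightarrow> A$i$j = 1"
    and "stationary_vector P p"
    and "is_markov_measure A P p \<mu>"
    and "real_eigenvalue P \<theta>" and "\<theta> > 0" and "\<theta> \<noteq> 1"
    and "\<forall>t. real_eigenvalue P t \<and> t > 0 \<and> t \<noteq> 1 \<longrightarrow> t \<le> \<theta>"
    and "u \<noteq> []" and "allowed_word A u"
  shows "\<exists>\<rho>. (\<lambda>m. - ln (measure \<mu> (survivors (cylinder A u) m)) / real m) \<longlonglongrightarrow> \<rho>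
             \<and> 0 < \<rho> \<and> \<rho> \<le> - ln \<theta>"
proof -
  note rs = assms(3) and pa = assms(4) and st = assms(5) and u = assms(11)
  let ?G = "max_avoid_prob P u" and ?W = "\<lambda>m. measure \<mu> (survivors (cylinder A u) m)"
  have p: "0 < p$j" for j by (rule stationary_vector_pos[OF assms(1-5)])
  obtain c where "0 < c" and c: "\<And>m. c * \<theta> ^ (m + length u - 1) \<le> ?G m"
    using max_avoid_prob_lower_bound[OF rs st p assms(7-9) u] by blast
  obtain K where "?G K < 1"
    using max_avoid_prob_less_1[OF assms(1-4) u allowed_word_path_weight_pos[OF rs pa assms(12)]] .
  obtain l where l: "(\<lambda>m. ln (?G m) / real m) \<longlonglongrightarrow> l" "l < 0" "ln \<theta> \<le> l"
    using log_rate_of_submultiplicative[OF max_avoid_prob_submult[OF rs u] _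
        max_avoid_prob_le_1[OF rs] \<open>0 < c\<close> \<open>0 < \<theta>\<close> c \<open>?G K < 1\<close>] u
    by (simp add: Suc_le_eq) blast
  define b where "b = Min (range (\<lambda>j. p$j))"
  have "0 < b" and b: "\<And>j. b \<le> p$j" using p by (auto simp: b_def)
  have "(\<lambda>m. ln (?W m) / real m) \<longlonglongrightarrow> l"
  proof (rule log_rate_of_comparable[OF l(1) \<open>0 < b\<close>])
    show "0 < ?G m" for m using c[of m] \<open>0 < c\<close> \<open>0 < \<theta>\<close> by (smt (verit) mult_pos_pos zero_less_power)
    show "b * ?G m \<le> ?W m" and "?W m \<le> ?G m" for m
      using max_avoid_prob_weighted_bounds[OF rs st b]
        markov_measure_survivors[OF rs pa assms(6) st u] by simp_all
  qed
  from tendsto_minus[OF this] show ?thesis using l by (intro exI[of _ "- l"]) auto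
qed

end
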